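(* Let $f: \mathbb{R}^n \to \mathbb{R}^n$ be topical, $\lambda \in \mathbb{R}$ and $k \ge 1$. There is a function $H^k: \mathbb{R}\cup\{-\infty\} \to \mathbb{R}\cup\{-\infty\}$ such that for every vertex $X$ of $\mathcal{G}^k(f)$ lying in a strongly connected component of $\mathcal{G}^k(f)$ — more precisely, for every strongly connected component $\mathcal{X}$ of $\mathcal{G}^k(f)$ — for all $i,j \in \bigcup_{X\in\mathcal{X}}\sigma(X)$ and all $x \in \mathbb{R}^n$: if $f(x) \le \lambda + x$ and $x \ge 0$, then $x_j \le H^k(x_i)$.
   Context: $f$ is topical if $f(x+h) = f(x)+h$ for all $h\in\mathbb{R}$ (scalar added to each coordinate) and $x\le y$ componentwise implies $f(x)\le f(y)$. $e_J$ is the characteristic vector of $J\subseteq\{1,\dots,n\}$. Aggregated graphs: $\mathcal{G}^1(f)$ is the directed graph on $\{1,\dots,n\}$ with an edge $i\to j$ iff $\lim_{u\to\infty} f_i(u e_{\{j\}}) = \infty$, with $\sigma(i) = \{i\}$. For $k\ge2$, the vertices of $\mathcal{G}^k(f)$ are the strongly connected components of $\mathcal{G}^{k-1}(f)$, a component $X$ being associated with $\sigma(X) = \bigcup_{Y\in X}\sigma(Y)$; there is an edge $I\to J$ in $\mathcal{G}^k(f)$ iff there exists $i\in\sigma(I)$ with $\lim_{u\to\infty} f_i(u e_{\sigma(J)}) = \infty$. A strongly connected component is an equivalence class under: $X$ communicates with $Y$ iff $X=Y$ or there are directed paths both from $X$ to $Y$ and from $Y$ to $X$. *)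

theory Defs
  imports "HOL-Analysis.Analysis"
begin

definition topical :: "(real^'n \<Rightarrow> real^'n) \<Rightarrow> bool" where
  "topical f \<longleftrightarrow>
     (\<forall>x h. f (x + (\<chi> i. h)) = f x + (\<chi> i. h)) \<and>
     (\<forall>x y. (\<forall>i. x $ i \<le> y $ i) \<longrightarrow> (\<forall>i. f x $ i \<le> f y $ i))"

definition charvec :: "'n set \<Rightarrow> real^'n" where
  "charvec J = (\<chi> j. if j \<in> J then 1 else 0)"

text \<open>Vertices of the aggregated graphs are represented by their sigma-sets.\<close>
definition agg_edge :: "(real^'n \<Rightarrow> real^'n) \<Rightarrow> 'n set \<Rightarrow> 'n set \<Rightarrow> bool" where
  "agg_edge f I J \<longleftrightarrow>
     (\<exists>i\<in>I. filterlim (\<lambda>u. f (u *\<^sub>R charvec J) $ i) at_top at_top)"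

definition agg_edges :: "(real^'n \<Rightarrow> real^'n) \<Rightarrow> 'n set set \<Rightarrow> ('n set \<times> 'n set) set" where
  "agg_edges f V = {(I, J). I \<in> V \<and> J \<in> V \<and> agg_edge f I J}"

definition communicates :: "'a set \<Rightarrow> ('a \<times> 'a) set \<Rightarrow> ('a \<times> 'a) set" where
  "communicates V E = {(X, Y). X \<in> V \<and> Y \<in> V \<and>
      (X = Y \<or> ((X, Y) \<in> E\<^sup>+ \<and> (Y, X) \<in> E\<^sup>+))}"

definition agg_sccs :: "(real^'n \<Rightarrow> real^'n) \<Rightarrow> 'n set set \<Rightarrow> 'n set set set" where
  "agg_sccs f V = V // communicates V (agg_edges f V)"

text \<open>agg_V0 f m is the vertex set (as sigma-sets) of G^(m+1)(f).\<close>
primrec agg_V0 :: "(real^'n \<Rightarrow> real^'n) \<Rightarrow> nat \<Rightarrow> 'n set set" where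
  "agg_V0 f 0 = {{i} | i. True}"
| "agg_V0 f (Suc m) = Union ` agg_sccs f (agg_V0 f m)"

definition agg_V :: "(real^'n \<Rightarrow> real^'n) \<Rightarrow> nat \<Rightarrow> 'n set set" where
  "agg_V f k = agg_V0 f (k - 1)"

end

theory Submission
  imports Defs
begin

text \<open>Say that coordinate i controls coordinate j if, among the nonnegative x with
  f(x) \<le> \<lambda> + x, the value x_j is bounded above on every set {x_i \<le> t}. Control is
  reflexive and transitive. For an edge I \<rightarrow> J of an aggregated graph pick i \<in> \<sigma>(I)
  with f_i(u e_\<sigma>(J)) \<rightarrow> \<infinity>. If m is the minimum of x over \<sigma>(J), then
  x \<ge> m e_\<sigma>(J), so monotonicity gives f_i(m e_\<sigma>(J)) \<le> f_i(x) \<le> \<lambda> + x_i: thus x_i \<le> t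
  bounds m, and m bounds every x_j that all coordinates in \<sigma>(J) control. By induction on
  k, any two coordinates in \<sigma> of a vertex of G^k(f), and hence in \<sigma> of a strongly
  connected component, control each other; the finitely many bounds combine into a
  single H, a pointwise supremum.\<close>

definition controls :: "'a set \<Rightarrow> ('a \<Rightarrow> real) \<Rightarrow> ('a \<Rightarrow> real) \<Rightarrow> bool" where
  "controls S g h \<longleftrightarrow> (\<forall>t. bdd_above (h ` {x \<in> S. g x \<le> t}))"

lemma controls_refl: "controls S g g"
  unfolding controls_def bdd_above_def by auto

lemma controls_trans:
  assumes "controls S g h" and "controls S h k"
  shows "controls S g k"
  unfolding controls_def
proof
  fix t
  obtain c where "\<forall>x \<in> S. g x \<le> t \<longrightarrow> h x \<le> c"
    using assms(1) unfolding controls_def bdd_above_def by fastforce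
  then have "{x \<in> S. g x \<le> t} \<subseteq> {x \<in> S. h x \<le> c}" by auto
  then show "bdd_above (k ` {x \<in> S. g x \<le> t})"
    using assms(2) unfolding controls_def by (meson bdd_above_mono image_mono)
qed

lemma controls_Min:
  assumes "finite J" and "J \<noteq> {}" and "\<forall>l \<in> J. controls S (g l) h"
  shows "controls S (\<lambda>x. Min ((\<lambda>l. g l x) ` J)) h"
  unfolding controls_def
proof
  fix t
  have "h ` {x \<in> S. Min ((\<lambda>l. g l x) ` J) \<le> t} \<subseteq> (\<Union>l \<in> J. h ` {x \<in> S. g l x \<le> t})"
    using assms(1,2) by (auto simp: Min_le_iff)
  moreover have "bdd_above (\<Union>l \<in> J. h ` {x \<in> S. g l x \<le> t})"
    using assms unfolding controls_def by simp
  ultimately show "bdd_above (h ` {x \<in> S. Min ((\<lambda>l. g l x) ` J) \<le> t})"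
    by (rule bdd_above_mono[rotated])
qed

lemma controls_bounding_function:
  assumes "finite P" and "\<forall>(i, j) \<in> P. controls S (g i) (g j)"
  shows "\<exists>H. \<forall>(i, j) \<in> P. \<forall>x \<in> S. g j x \<le> H (g i x)"
proof -
  define H where "H t = Sup (\<Union>(i, j) \<in> P. g j ` {x \<in> S. g i x \<le> t})" for t
  have "g j x \<le> H (g i x)" if "(i, j) \<in> P" and "x \<in> S" for i j x
  proof -
    have "g j x \<in> (\<Union>(i', j') \<in> P. g j' ` {y \<in> S. g i' y \<le> g i x})"
      using that by force
    moreover have "bdd_above (\<Union>(i', j') \<in> P. g j' ` {y \<in> S. g i' y \<le> g i x})"
      using assms unfolding controls_def by auto
    ultimately show ?thesis
      unfolding H_def by (rule cSup_upper)
  qed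
  then show ?thesis by blast
qed

definition nonneg_subeigenvectors :: "(real^'n \<Rightarrow> real^'n) \<Rightarrow> real \<Rightarrow> (real^'n) set" where
  "nonneg_subeigenvectors f lam = {x. (\<forall>l. f x $ l \<le> lam + x $ l) \<and> (\<forall>l. 0 \<le> x $ l)}"

abbreviation coord_controls :: "(real^'n \<Rightarrow> real^'n) \<Rightarrow> real \<Rightarrow> 'n \<Rightarrow> 'n \<Rightarrow> bool" where
  "coord_controls f lam i j \<equiv>
     controls (nonneg_subeigenvectors f lam) (\<lambda>x. x $ i) (\<lambda>x. x $ j)"

lemma divergent_coordinate_controls_Min:
  assumes "topical f" and "filterlim (\<lambda>u. f (u *\<^sub>R charvec J) $ i) at_top at_top"
    and "J \<noteq> {}"
  shows "controls (nonneg_subeigenvectors f lam) (\<lambda>x. x $ i) (\<lambda>x. Min ((\<lambda>l. x $ l) ` J))"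
  unfolding controls_def
proof
  fix t
  obtain U where U: "\<And>u. u \<ge> U \<Longrightarrow> f (u *\<^sub>R charvec J) $ i > lam + t"
    using assms(2) unfolding filterlim_at_top_dense eventually_at_top_linorder by blast
  have "Min ((\<lambda>l. x $ l) ` J) \<le> U"
    if x: "x \<in> nonneg_subeigenvectors f lam" and "x $ i \<le> t" for x
  proof (rule ccontr)
    define m where "m = Min ((\<lambda>l. x $ l) ` J)"
    assume "\<not> Min ((\<lambda>l. x $ l) ` J) \<le> U"
    then have "lam + t < f (m *\<^sub>R charvec J) $ i"
      using U unfolding m_def by simp
    also have "\<dots> \<le> f x $ i"
    proof -
      have "(m *\<^sub>R charvec J) $ l \<le> x $ l" for l
        using x unfolding m_def charvec_def nonneg_subeigenvectors_def by auto
      then show ?thesis using assms(1) unfolding topical_def by blast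
    qed
    also have "\<dots> \<le> lam + x $ i"
      using x unfolding nonneg_subeigenvectors_def by blast
    also have "\<dots> \<le> lam + t"
      using \<open>x $ i \<le> t\<close> by simp
    finally show False by simp
  qed
  then show "bdd_above ((\<lambda>x. Min ((\<lambda>l. x $ l) ` J)) `
      {x \<in> nonneg_subeigenvectors f lam. x $ i \<le> t})"
    by (intro bdd_aboveI[of _ U]) auto
qed

lemma agg_edge_controls:
  assumes "topical f" and "agg_edge f I J" and "j \<in> J"
    and "\<forall>l \<in> J. coord_controls f lam l j"
  shows "\<exists>i \<in> I. coord_controls f lam i j"
proof -
  obtain i where "i \<in> I" and div: "filterlim (\<lambda>u. f (u *\<^sub>R charvec J) $ i) at_top at_top"
    using assms(2) unfolding agg_edge_def by blast
  have "J \<noteq> {}"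
    using assms(3) by blast
  then have "controls (nonneg_subeigenvectors f lam) (\<lambda>x. x $ i) (\<lambda>x. Min ((\<lambda>l. x $ l) ` J))"
    by (rule divergent_coordinate_controls_Min[OF assms(1) div])
  moreover have "controls (nonneg_subeigenvectors f lam) (\<lambda>x. Min ((\<lambda>l. x $ l) ` J)) (\<lambda>x. x $ j)"
    using \<open>J \<noteq> {}\<close> assms(4) by (intro controls_Min[where g = "\<lambda>l x. x $ l"]) auto
  ultimately show ?thesis
    using \<open>i \<in> I\<close> controls_trans by blast
qed

lemma agg_path_controls:
  assumes "topical f" and V: "\<forall>Y \<in> V. \<forall>i \<in> Y. \<forall>j \<in> Y. coord_controls f lam i j"
    and "Y \<in> V" and "(Y, Z) \<in> (agg_edges f V)\<^sup>*"
  shows "\<forall>i \<in> Y. \<forall>j \<in> Z. coord_controls f lam i j"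
  using assms(4)
proof (induction rule: rtrancl_induct)
  case base
  then show ?case using V \<open>Y \<in> V\<close> by blast
next
  case (step W Z)
  then have "agg_edge f W Z" and "Z \<in> V"
    unfolding agg_edges_def by auto
  then have "\<forall>j \<in> Z. \<exists>w \<in> W. coord_controls f lam w j"
    using agg_edge_controls[OF assms(1)] V by blast
  then show ?case
    using step.IH controls_trans by blast
qed

lemma communicates_class_rtrancl:
  assumes "\<X> \<in> V // communicates V E" and "Y \<in> \<X>" and "Z \<in> \<X>"
  shows "Y \<in> V" and "(Y, Z) \<in> E\<^sup>*"
proof -
  obtain X where "\<X> = communicates V E `` {X}"
    using assms(1) unfolding quotient_def by blast
  then have "(X, Y) \<in> communicates V E" and "(X, Z) \<in> communicates V E"
    using assms(2,3) by auto
  then have "Y \<in> V" and "(Y, X) \<in> E\<^sup>*" and "(X, Z) \<in> E\<^sup>*"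
    unfolding communicates_def by auto
  then show "Y \<in> V" and "(Y, Z) \<in> E\<^sup>*" by auto
qed

lemma agg_scc_controls:
  assumes "topical f" and "\<forall>Y \<in> V. \<forall>i \<in> Y. \<forall>j \<in> Y. coord_controls f lam i j"
    and "\<X> \<in> agg_sccs f V"
  shows "\<forall>i \<in> \<Union>\<X>. \<forall>j \<in> \<Union>\<X>. coord_controls f lam i j"
proof (intro ballI)
  have \<X>: "\<X> \<in> V // communicates V (agg_edges f V)"
    using assms(3) unfolding agg_sccs_def .
  fix i j
  assume "i \<in> \<Union>\<X>" and "j \<in> \<Union>\<X>"
  then obtain Y Z where Y: "Y \<in> \<X>" "i \<in> Y" and Z: "Z \<in> \<X>" "j \<in> Z" by blast
  show "coord_controls f lam i j"
    using agg_path_controls[OF assms(1,2) communicates_class_rtrancl[OF \<X> Y(1) Z(1)]] Y(2) Z(2)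
    by blast
qed

lemma agg_V0_controls:
  assumes "topical f"
  shows "\<forall>Y \<in> agg_V0 f m. \<forall>i \<in> Y. \<forall>j \<in> Y. coord_controls f lam i j"
proof (induction m)
  case 0
  then show ?case using controls_refl by auto
next
  case (Suc m)
  then show ?case using agg_scc_controls[OF assms] by auto
qed

theorem lemma3p4:
  fixes f :: "real^'n \<Rightarrow> real^'n" and lam :: real and k :: nat
  assumes "topical f" and "k \<ge> 1"
  shows "\<exists>H :: ereal \<Rightarrow> ereal. (\<forall>y. H y \<noteq> \<infinity>) \<and>
    (\<forall>\<X> \<in> agg_sccs f (agg_V f k). \<forall>i \<in> \<Union>\<X>. \<forall>j \<in> \<Union>\<X>. \<forall>x :: real^'n.
        (\<forall>l. f x $ l \<le> lam + x $ l) \<and> (\<forall>l. 0 \<le> x $ l)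
        \<longrightarrow> ereal (x $ j) \<le> H (ereal (x $ i)))"
proof -
  let ?P = "{(i, j). \<exists>\<X> \<in> agg_sccs f (agg_V f k). i \<in> \<Union>\<X> \<and> j \<in> \<Union>\<X>}"
  have "\<forall>(i, j) \<in> ?P. coord_controls f lam i j"
    using agg_scc_controls[OF assms(1) agg_V0_controls[OF assms(1)]]
    unfolding agg_V_def by blast
  from controls_bounding_function[where g = "\<lambda>i x. x $ i", OF _ this]
  obtain H
    where H: "\<forall>(i, j) \<in> ?P. \<forall>x \<in> nonneg_subeigenvectors f lam. x $ j \<le> H (x $ i)"
    by auto
  show ?thesis
  proof (intro exI[of _ "\<lambda>y. ereal (H (real_of_ereal y))"] conjI ballI allI impI)
    show "ereal (H (real_of_ereal y)) \<noteq> \<infinity>" for y by simp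
    fix \<X> i j and x :: "real^'n"
    assume "\<X> \<in> agg_sccs f (agg_V f k)" and "i \<in> \<Union>\<X>" and "j \<in> \<Union>\<X>"
      and "(\<forall>l. f x $ l \<le> lam + x $ l) \<and> (\<forall>l. 0 \<le> x $ l)"
    then have "(i, j) \<in> ?P" and "x \<in> nonneg_subeigenvectors f lam"
      unfolding nonneg_subeigenvectors_def by blast+
    then show "ereal (x $ j) \<le> ereal (H (real_of_ereal (ereal (x $ i))))"
      using H by auto
  qed
qed

end
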